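(* Let $q$ be an odd prime power, $P\in\mathbb{F}_q[T]$ monic irreducible, $h=(h_1,\dots,h_k)$ a $k$-tuple of pairwise distinct polynomials, and fix an integer $\nu>\nu_h(P)$. (1) If $\chi_q(P)=-1$, then $\delta_{q,h}(P)=|P|^{-\nu}\big(\#\Omega^*_{q,h}(P^\nu)+\frac{1}{|P|+1}\#\Omega_{q,h}(P^\nu)\big)$ if $\nu$ is odd, and $\delta_{q,h}(P)=|P|^{-\nu}\big(\#\Omega^*_{q,h}(P^\nu)+\frac{|P|}{|P|+1}\#\Omega_{q,h}(P^\nu)\big)$ if $\nu$ is even. (2) If $\chi_q(P)=0$, then $\delta_{q,h}(P)=|P|^{-\nu}\big(\#\Omega^*_{q,h}(P^\nu)+\frac12\#\Omega_{q,h}(P^\nu)\big)$.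
   Context: $|P|=q^{\deg P}$; $v_P$ the $P$-adic valuation; $\chi_q(f)=0$ if $f(0)=0$, $1$ if $f(0)$ is a nonzero square in $\mathbb{F}_q$, $-1$ otherwise. $\mathcal{A}_q(P^\nu)=\{A^2+TB^2\bmod P^\nu:A,B\in\mathbb{F}_q[T]\}$, $\mathcal{A}_{q,h}(P^\nu)=\{f\bmod P^\nu:f+h_i\in\mathcal{A}_q(P^\nu)\ \forall i\}$, $\delta_{q,h}(P)=\lim_{\nu\to\infty}|P|^{-\nu}\#\mathcal{A}_{q,h}(P^\nu)$. $\nu_h(P)=\max_{i\ne j}v_P(h_i-h_j)$ (taken as $0$ if $k=1$). $\Omega_{q,h}(P^\nu)=\{f\in\mathcal{A}_{q,h}(P^\nu):\exists i\ f+h_i\equiv0\bmod P^\nu\}$ and $\Omega^*_{q,h}(P^\nu)=\{f\in\mathcal{A}_{q,h}(P^\nu):\forall i\ f+h_i\not\equiv0\bmod P^\nu\}$. *)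

theory Defs
  imports "HOL-Analysis.Analysis" "HOL-Computational_Algebra.Computational_Algebra"
begin

text \<open>Polynomials over the finite field F_q are modelled as 'a poly with
  'a :: {finite, field}; q = CARD('a). Residues modulo M are represented by
  their canonical remainders f mod M.\<close>

definition absP :: "'a::{finite,field_gcd} poly \<Rightarrow> real" where
  "absP P = real (CARD('a)) ^ degree P"

definition chi_q :: "'a::{finite,field_gcd} poly \<Rightarrow> int" where
  "chi_q f = (if coeff f 0 = 0 then 0
              else if (\<exists>c. coeff f 0 = c ^ 2) then 1 else -1)"

definition A_q :: "'a::{finite,field_gcd} poly \<Rightarrow> 'a poly set" where
  "A_q M = {(A ^ 2 + [:0, 1:] * B ^ 2) mod M | A B. True}"

definition A_qh :: "'a::{finite,field_gcd} poly list \<Rightarrow> 'a poly \<Rightarrow> 'a poly set" where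
  "A_qh hs M = {f mod M | f. \<forall>i<length hs. (f + hs ! i) mod M \<in> A_q M}"

definition delta_qh :: "'a::{finite,field_gcd} poly list \<Rightarrow> 'a poly \<Rightarrow> real" where
  "delta_qh hs P = lim (\<lambda>n. real (card (A_qh hs (P ^ n))) / absP P ^ n)"

definition nu_h :: "'a::{finite,field_gcd} poly list \<Rightarrow> 'a poly \<Rightarrow> nat" where
  "nu_h hs P = Max ({multiplicity P (hs ! i - hs ! j) | i j.
                      i < length hs \<and> j < length hs \<and> i \<noteq> j} \<union> {0})"

definition Omega_qh :: "'a::{finite,field_gcd} poly list \<Rightarrow> 'a poly \<Rightarrow> 'a poly set" where
  "Omega_qh hs M = {f \<in> A_qh hs M. \<exists>i<length hs. (f + hs ! i) mod M = 0}"

definition Omega_star_qh :: "'a::{finite,field_gcd} poly list \<Rightarrow> 'a poly \<Rightarrow> 'a poly set" where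
  "Omega_star_qh hs M = {f \<in> A_qh hs M. \<forall>i<length hs. (f + hs ! i) mod M \<noteq> 0}"

end

theory Submission
  imports Defs
begin

text \<open>Each residue \<open>s\<close> modulo \<open>P^n\<close> has \<open>|P|\<close> lifts \<open>s + P^n t\<close> modulo \<open>P^(n+1)\<close>. For
  \<open>n \<ge> \<nu>\<close> at most one shift \<open>s + h\<^sub>i\<close> is divisible by \<open>P^n\<close>, and since \<open>q\<close> is odd a Hensel
  argument shows that representability by \<open>A^2 + T B^2\<close> lifts automatically for every shift not
  divisible by \<open>P^n\<close>. So every element of \<open>\<Omega>\<^sup>*\<close> has all \<open>|P|\<close> lifts in \<open>A\<close>, while an element
  of \<open>\<Omega>\<close> has \<open>E\<^sub>n\<close> lifts in \<open>A\<close>, exactly one of them in \<open>\<Omega>\<close>; here \<open>E\<^sub>n\<close> counts the residues \<open>t\<close>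
  with \<open>P^n t\<close> representable modulo \<open>P^(n+1)\<close>. Hence \<open>#\<Omega>(P^n)\<close> is constant and
  \<open>#A(P^(n+1)) = |P| (#A(P^n) - #\<Omega>) + E\<^sub>n #\<Omega>\<close>, a linear recursion that is solved explicitly.
  If \<open>\<chi>(P) = -1\<close> then \<open>-T\<close> is not a square modulo \<open>P\<close>, the form is anisotropic modulo \<open>P\<close> and
  \<open>E\<^sub>n\<close> is \<open>|P|\<close> or \<open>1\<close> according to the parity of \<open>n\<close>; if \<open>\<chi>(P) = 0\<close> then \<open>P = T\<close> and
  \<open>E\<^sub>n = (q + 1) / 2\<close> is the number of squares in \<open>\<bbbF>\<^sub>q\<close>.\<close>

lemma of_nat_CARD_eq_0: "of_nat CARD('a::{finite,ring_1}) = (0::'a)"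
proof -
  have "bij_betw (\<lambda>x::'a. x + 1) UNIV UNIV"
    by (rule bij_betwI[where g = "\<lambda>x. x - 1"]) auto
  then have "(\<Sum>x\<in>UNIV. x + 1) = (\<Sum>x\<in>UNIV. x :: 'a)"
    by (rule sum.reindex_bij_betw)
  then show ?thesis
    by (simp add: sum.distrib)
qed

lemma two_neq_zero_if_odd_card:
  assumes "odd CARD('a::{finite,field})"
  shows "(2::'a) \<noteq> 0"
proof
  assume two: "(2::'a) = 0"
  obtain k where "CARD('a) = 2 * k + 1"
    using assms by (auto elim: oddE)
  then have "(0::'a) = 2 * of_nat k + 1"
    by (metis of_nat_CARD_eq_0 of_nat_1 of_nat_add of_nat_mult of_nat_numeral)
  with two show False
    by simp
qed

lemma card_eq_sum_card_fibres:
  assumes "finite A"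
  shows "card A = (\<Sum>y\<in>f ` A. card {x \<in> A. f x = y})"
  using sum_fun_comp[OF assms finite_imageI[OF assms] subset_refl, of "\<lambda>_. 1::nat"]
  by simp

lemma card_le_twice_card_image:
  assumes "finite A"
    and fibre: "\<And>x y. x \<in> A \<Longrightarrow> y \<in> A \<Longrightarrow> f x = f y \<Longrightarrow> y = x \<or> y = g x"
  shows "card A \<le> 2 * card (f ` A)"
proof -
  have "card {x \<in> A. f x = y} \<le> 2" if "y \<in> f ` A" for y
  proof -
    from that obtain a where a: "a \<in> A" "y = f a"
      by blast
    have "x = a \<or> x = g a" if "x \<in> A" "f x = y" for x
      using fibre[OF a(1) that(1)] that(2) a(2) by simp
    then have "{x \<in> A. f x = y} \<subseteq> {a, g a}"
      by blast
    then have "card {x \<in> A. f x = y} \<le> card {a, g a}"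
      by (rule card_mono[rotated]) simp
    also have "\<dots> \<le> 2"
      by (rule card_insert_le_m1 [THEN order_trans]) auto
    finally show ?thesis .
  qed
  then have "card A \<le> (\<Sum>y\<in>f ` A. 2)"
    unfolding card_eq_sum_card_fibres[OF assms(1), of f] by (rule sum_mono)
  then show ?thesis
    by simp
qed

lemma card_squares:
  assumes "odd CARD('a::{finite,field})"
  shows "2 * card (range (\<lambda>s::'a. s^2)) = CARD('a) + 1"
proof -
  let ?S = "range (\<lambda>s::'a. s^2)"
  have two: "(2::'a) \<noteq> 0"
    using two_neq_zero_if_odd_card[OF assms] .
  have fibre: "card {s. s^2 = c} = (if c = 0 then 1 else 2)" if "c \<in> ?S" for c
  proof -
    obtain r where c: "c = r^2"
      using \<open>c \<in> ?S\<close> by blast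
    have "{s. s^2 = c} = {r, -r}"
      unfolding c by (auto simp: power2_eq_iff)
    moreover have "r = -r \<longleftrightarrow> c = 0"
      using two unfolding c by (auto simp: minus_equation_iff[of r] simp flip: mult_2)
    ultimately show ?thesis
      by (auto simp: c)
  qed
  have "CARD('a) = (\<Sum>c\<in>?S. card {s. s^2 = c})"
    using card_eq_sum_card_fibres[of "UNIV::'a set" "\<lambda>s. s^2"] by simp
  also have "\<dots> = 1 + (\<Sum>c\<in>?S - {0}. 2)"
    by (subst sum.remove[of _ 0]) (auto simp: fibre intro!: sum.cong)
  finally have "CARD('a) = 1 + 2 * (card ?S - 1)"
    by (simp add: card_Diff_singleton_if)
  moreover have "card ?S \<ge> 1"
    by (simp add: Suc_leI card_gt_0_iff)
  ultimately show ?thesis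
    by linarith
qed

section \<open>Residues modulo a polynomial\<close>

definition poly_residues :: "'a::field poly \<Rightarrow> 'a poly set" where
  "poly_residues M = {r. r mod M = r}"

lemma mod_in_poly_residues [simp]: "f mod M \<in> poly_residues M"
  by (simp add: poly_residues_def)

lemma zero_in_poly_residues [simp]: "0 \<in> poly_residues M"
  by (simp add: poly_residues_def)

lemma poly_residues_iff_degree:
  assumes "M \<noteq> 0"
  shows "r \<in> poly_residues M \<longleftrightarrow> r = 0 \<or> degree r < degree M"
proof
  assume "r \<in> poly_residues M"
  then show "r = 0 \<or> degree r < degree M"
    using degree_mod_less[OF assms, of r] by (simp add: poly_residues_def)
qed (auto simp: poly_residues_def intro: mod_poly_less)

lemma card_polys_with_coeffs_vanishing_from:
  "finite {r::'a::{finite,zero} poly. \<forall>i\<ge>m. coeff r i = 0}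
    \<and> card {r::'a poly. \<forall>i\<ge>m. coeff r i = 0} = CARD('a) ^ m"
proof (induction m)
  case 0
  have "{r::'a poly. \<forall>i\<ge>0. coeff r i = 0} = {0}"
    by (auto intro: poly_eqI)
  then show ?case
    by simp
next
  case (Suc m)
  let ?D = "\<lambda>m. {r::'a poly. \<forall>i\<ge>m. coeff r i = 0}"
  have "?D (Suc m) = (\<lambda>(a, p). pCons a p) ` (UNIV \<times> ?D m)"
  proof (intro equalityI subsetI)
    fix r :: "'a poly"
    assume r: "r \<in> ?D (Suc m)"
    obtain a p where rp: "r = pCons a p"
      by (cases r)
    have "coeff p i = 0" if "i \<ge> m" for i
      using r[unfolded mem_Collect_eq, rule_format, of "Suc i"] that by (simp add: rp)
    with rp show "r \<in> (\<lambda>(a, p). pCons a p) ` (UNIV \<times> ?D m)"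
      by auto
  qed (auto simp: coeff_pCons split: nat.splits)
  moreover have "inj_on (\<lambda>(a, p). pCons a p) (UNIV \<times> ?D m)"
    by (auto simp: inj_on_def)
  ultimately show ?case
    using Suc by (simp add: card_image card_cartesian_product)
qed

lemma poly_residues_eq_coeffs_vanishing:
  assumes "M \<noteq> 0"
  shows "poly_residues M = {r. \<forall>i\<ge>degree M. coeff r i = 0}"
proof (intro equalityI subsetI)
  fix r
  assume "r \<in> poly_residues M"
  then show "r \<in> {r. \<forall>i\<ge>degree M. coeff r i = 0}"
    using assms by (auto simp: poly_residues_iff_degree intro: coeff_eq_0)
next
  fix r :: "'a poly"
  assume "r \<in> {r. \<forall>i\<ge>degree M. coeff r i = 0}"
  then have vanish: "\<forall>i\<ge>degree M. coeff r i = 0"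
    by simp
  have "r = 0 \<or> degree r < degree M"
    using vanish[rule_format, of "degree r"] by (metis leading_coeff_0_iff not_le)
  then show "r \<in> poly_residues M"
    using assms by (simp add: poly_residues_iff_degree)
qed

lemma finite_poly_residues [simp]:
  "M \<noteq> 0 \<Longrightarrow> finite (poly_residues (M::'a::{finite,field} poly))"
  by (simp add: poly_residues_eq_coeffs_vanishing card_polys_with_coeffs_vanishing_from)

lemma card_poly_residues:
  "M \<noteq> 0 \<Longrightarrow> card (poly_residues (M::'a::{finite,field} poly)) = CARD('a) ^ degree M"
  by (simp add: poly_residues_eq_coeffs_vanishing card_polys_with_coeffs_vanishing_from)

definition lifts :: "'a::field poly \<Rightarrow> nat \<Rightarrow> 'a poly set \<Rightarrow> 'a poly \<Rightarrow> 'a poly set" where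
  "lifts P n X s = {t \<in> poly_residues P. s + P^n * t \<in> X}"

lemma bij_betw_lift:
  fixes P :: "'a::field poly"
  assumes "P \<noteq> 0"
  shows "bij_betw (\<lambda>(s, t). s + P^n * t) (poly_residues (P^n) \<times> poly_residues P)
           (poly_residues (P^(n+1)))"
proof (rule bij_betwI[where g = "\<lambda>x. (x mod P^n, x div P^n mod P)"])
  have split: "x mod P^(n+1) = P^n * (x div P^n mod P) + x mod P^n" for x
    unfolding power_add power_one_right by (rule poly_mod_mult_right)
  have lift: "(s + P^n * t) mod P^n = s" "(s + P^n * t) div P^n = t"
    if "s \<in> poly_residues (P^n)" for s t
    using that assms by (simp_all add: poly_residues_def mod_eq_self_iff_div_eq_0)
  show "(\<lambda>(s, t). s + P^n * t) \<in> poly_residues (P^n) \<times> poly_residues P \<rightarrow> poly_residues (P^(n+1))"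
  proof (intro Pi_I, clarify)
    fix s t
    assume s: "s \<in> poly_residues (P^n)" and t: "t \<in> poly_residues P"
    have "(s + P^n * t) mod P^(n+1) = s + P^n * t"
      unfolding split lift[OF s] using t by (simp add: poly_residues_def)
    then show "s + P^n * t \<in> poly_residues (P^(n+1))"
      by (simp only: poly_residues_def mem_Collect_eq)
  qed
  show "(\<lambda>x. (x mod P^n, x div P^n mod P)) \<in> poly_residues (P^(n+1)) \<rightarrow> poly_residues (P^n) \<times> poly_residues P"
    by simp
  show "(\<lambda>x. (x mod P^n, x div P^n mod P)) ((\<lambda>(s, t). s + P^n * t) p) = p"
    if "p \<in> poly_residues (P^n) \<times> poly_residues P" for p
    using that lift by (auto simp: poly_residues_def)
  show "(\<lambda>(s, t). s + P^n * t) ((\<lambda>x. (x mod P^n, x div P^n mod P)) x) = x"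
    if "x \<in> poly_residues (P^(n+1))" for x
    using that split[of x] by (simp add: poly_residues_def add.commute)
qed

lemma card_eq_sum_card_lifts:
  fixes P :: "'a::{finite,field} poly"
  assumes "P \<noteq> 0" and "X \<subseteq> poly_residues (P^(n+1))"
  shows "card X = (\<Sum>s\<in>poly_residues (P^n). card (lifts P n X s))"
proof -
  let ?f = "\<lambda>(s, t). s + P^n * t"
  let ?S = "Sigma (poly_residues (P^n)) (lifts P n X)"
  note bij = bij_betw_lift[OF assms(1), of n]
  have "?f ` ?S = X"
  proof
    show "X \<subseteq> ?f ` ?S"
    proof
      fix x
      assume "x \<in> X"
      then obtain s t where "(s, t) \<in> poly_residues (P^n) \<times> poly_residues P" "x = ?f (s, t)"
        using assms(2) bij_betw_imp_surj_on[OF bij] by blast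
      with \<open>x \<in> X\<close> show "x \<in> ?f ` ?S"
        by (auto simp: lifts_def)
    qed
  qed (auto simp: lifts_def)
  then have "bij_betw ?f ?S X"
    by (intro bij_betw_subset[OF bij]) (auto simp: lifts_def)
  then have "card X = card ?S"
    by (simp add: bij_betw_same_card)
  also have "\<dots> = (\<Sum>s\<in>poly_residues (P^n). card (lifts P n X s))"
    using assms(1) by (intro card_SigmaI) (auto simp: lifts_def)
  finally show ?thesis .
qed

definition represented :: "'a::comm_ring_1 poly \<Rightarrow> 'a poly \<Rightarrow> bool" where
  "represented M g \<longleftrightarrow> (\<exists>A B. M dvd g - (A^2 + [:0,1:] * B^2))"

lemma representedI: "M dvd g - (A^2 + [:0,1:] * B^2) \<Longrightarrow> represented M g"
  unfolding represented_def by blast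

lemma represented_cong:
  assumes "M dvd g - g'" and "represented M g"
  shows "represented M g'"
proof -
  obtain A B where "M dvd g - (A^2 + [:0,1:] * B^2)"
    using assms(2) unfolding represented_def by blast
  then have "M dvd (g - (A^2 + [:0,1:] * B^2)) - (g - g')"
    using assms(1) by (rule dvd_diff)
  then show ?thesis
    by (auto simp: algebra_simps intro: representedI)
qed

lemma represented_dvd: "M' dvd M \<Longrightarrow> represented M g \<Longrightarrow> represented M' g"
  unfolding represented_def using dvd_trans by blast

lemma represented_if_dvd: "M dvd g \<Longrightarrow> represented M g"
  by (rule representedI[of _ _ 0 0]) simp

lemma X_dvd_iff: "[:0,1:] dvd (f::'a::comm_ring_1 poly) \<longleftrightarrow> coeff f 0 = 0"
  using dvd_iff_poly_eq_0[of 0 f] by (simp add: poly_0_coeff_0)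

lemma represented_times_X_iff:
  fixes M g :: "'a::field poly"
  shows "represented ([:0,1:] * M) ([:0,1:] * g) \<longleftrightarrow> represented M g"
proof
  assume "represented ([:0,1:] * M) ([:0,1:] * g)"
  then obtain A B where AB: "[:0,1:] * M dvd [:0,1:] * g - (A^2 + [:0,1:] * B^2)"
    unfolding represented_def by blast
  then have "coeff ([:0,1:] * g - (A^2 + [:0,1:] * B^2)) 0 = 0"
    using dvd_mult_left X_dvd_iff by blast
  then have "[:0,1:] dvd A"
    by (simp add: X_dvd_iff coeff_mult_0 power2_eq_square)
  then obtain A1 where "A = [:0,1:] * A1"
    by (auto elim: dvdE)
  with AB have "[:0,1:] * M dvd [:0,1:] * (g - (B^2 + [:0,1:] * A1^2))"
    by (simp add: algebra_simps power2_eq_square)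
  then have "M dvd g - (B^2 + [:0,1:] * A1^2)"
    using dvd_times_left_cancel_iff[of "[:0,1:]" M] pCons_eq_0_iff one_neq_zero by blast
  then show "represented M g"
    by (rule representedI)
next
  assume "represented M g"
  then obtain A B where "M dvd g - (A^2 + [:0,1:] * B^2)"
    unfolding represented_def by blast
  then have "[:0,1:] * M dvd [:0,1:] * (g - (A^2 + [:0,1:] * B^2))"
    by (rule mult_dvd_mono[OF dvd_refl])
  also have "[:0,1:] * (g - (A^2 + [:0,1:] * B^2)) = [:0,1:] * g - (([:0,1:] * B)^2 + [:0,1:] * A^2)"
    by (simp add: algebra_simps power2_eq_square)
  finally show "represented ([:0,1:] * M) ([:0,1:] * g)"
    by (rule representedI)
qed

lemma represented_times_square:
  "represented M g \<Longrightarrow> represented (P^2 * M) (P^2 * g)"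
proof -
  assume "represented M g"
  then obtain A B where "M dvd g - (A^2 + [:0,1:] * B^2)"
    unfolding represented_def by blast
  then have "P^2 * M dvd P^2 * (g - (A^2 + [:0,1:] * B^2))"
    by (rule mult_dvd_mono[OF dvd_refl])
  also have "P^2 * (g - (A^2 + [:0,1:] * B^2)) = P^2 * g - ((P * A)^2 + [:0,1:] * (P * B)^2)"
    by (simp add: algebra_simps power2_eq_square)
  finally show ?thesis
    by (rule representedI)
qed

lemma represented_mod_add_iff: "represented M (f mod M + h) \<longleftrightarrow> represented M (f + h)"
proof -
  have "M dvd (f + h) - (f mod M + h)"
    by (simp add: minus_mod_eq_mult_div)
  then show ?thesis
    using represented_cong dvd_diff_commute by blast
qed

lemma mod_in_A_q_iff: "x mod M \<in> A_q M \<longleftrightarrow> represented M x"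
  unfolding A_q_def represented_def by (auto simp: mod_eq_dvd_iff)

lemma A_qh_iff:
  "r \<in> A_qh hs M \<longleftrightarrow> r \<in> poly_residues M \<and> (\<forall>i<length hs. represented M (r + hs ! i))"
proof
  assume "r \<in> A_qh hs M"
  then obtain f where "r = f mod M" and "\<forall>i<length hs. (f + hs ! i) mod M \<in> A_q M"
    unfolding A_qh_def by blast
  then show "r \<in> poly_residues M \<and> (\<forall>i<length hs. represented M (r + hs ! i))"
    by (simp add: mod_in_A_q_iff represented_mod_add_iff)
next
  assume "r \<in> poly_residues M \<and> (\<forall>i<length hs. represented M (r + hs ! i))"
  then show "r \<in> A_qh hs M"
    unfolding A_qh_def poly_residues_def by (auto simp: mod_in_A_q_iff intro!: exI[of _ r])
qed

section \<open>Hensel lifting\<close>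

lemma inverse_mod_prime_elem:
  fixes P :: "'a::field_gcd poly"
  assumes "prime_elem P" and "\<not> P dvd y"
  shows "\<exists>v. P dvd y * v - 1"
proof -
  obtain a b where "bezout_coefficients P y = (a, b)"
    by (cases "bezout_coefficients P y")
  then have "a * P + b * y = gcd P y"
    by (rule bezout_coefficients)
  also have "\<dots> = 1"
    using prime_elem_imp_coprime[OF assms] by (simp add: coprime_iff_gcd_eq_1)
  finally have "y * b - 1 = P * (- a)"
    by (simp add: algebra_simps)
  then show ?thesis
    by (intro exI[of _ b]) simp
qed

lemma hensel_lift_square:
  fixes P :: "'a::field_gcd poly"
  assumes P: "prime_elem P" and two: "(2::'a) \<noteq> 0" and nondeg: "\<not> P dvd c * z" and n: "n \<ge> 1"
    and approx: "P^n dvd g - (c * z^2 + r)"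
  shows "\<exists>z'. P^(n+1) dvd (g + P^n * t) - (c * z'^2 + r)"
proof -
  obtain w where w: "g - (c * z^2 + r) = P^n * w"
    using approx by (auto elim: dvdE)
  have "\<not> P dvd 2"
  proof
    assume "P dvd 2"
    moreover have "is_unit (2 :: 'a poly)"
      using two by (simp add: numeral_poly is_unit_const_poly_iff dvd_field_iff)
    ultimately show False
      using P by (meson dvd_unit_imp_unit prime_elem_not_unit)
  qed
  then have "\<not> P dvd 2 * c * z"
    using nondeg P by (simp add: prime_elem_dvd_mult_iff mult.assoc)
  then obtain v where v: "P dvd 2 * c * z * v - 1"
    using inverse_mod_prime_elem[OF P] by blast
  \<comment> \<open>Newton step: \<open>v\<close> inverts the derivative \<open>2 c z\<close> modulo \<open>P\<close>.\<close>
  define a where "a = (w + t) * v"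
  have eq: "(g + P^n * t) - (c * (z + P^n * a)^2 + r)
      = P^n * ((w + t) * (1 - 2 * c * z * v) - c * (P^n * a^2))"
    using w unfolding a_def by (simp add: algebra_simps power2_eq_square)
  have "P dvd (w + t) * (1 - 2 * c * z * v) - c * (P^n * a^2)"
  proof (rule dvd_diff)
    show "P dvd (w + t) * (1 - 2 * c * z * v)"
      using v by (simp add: dvd_diff_commute)
    show "P dvd c * (P^n * a^2)"
      using n by (simp add: dvd_power)
  qed
  then have "P^n * P dvd P^n * ((w + t) * (1 - 2 * c * z * v) - c * (P^n * a^2))"
    by (rule mult_dvd_mono[OF dvd_refl])
  then have "P^(n+1) dvd (g + P^n * t) - (c * (z + P^n * a)^2 + r)"
    by (simp only: eq power_add power_one_right)
  then show ?thesis
    by blast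
qed

lemma represented_lift_nonsingular:
  fixes P :: "'a::field_gcd poly"
  assumes P: "prime_elem P" and two: "(2::'a) \<noteq> 0" and n: "n \<ge> 1"
    and approx: "P^n dvd g - (A^2 + [:0,1:] * B^2)"
    and nonsingular: "\<not> P dvd A \<or> \<not> P dvd [:0,1:] * B"
  shows "represented (P^(n+1)) (g + P^n * t)"
  using nonsingular
proof
  assume "\<not> P dvd A"
  with approx obtain z' where "P^(n+1) dvd (g + P^n * t) - (1 * z'^2 + [:0,1:] * B^2)"
    using hensel_lift_square[OF P two _ n, of 1 A g "[:0,1:] * B^2"] by auto
  then show ?thesis
    by (auto intro: representedI)
next
  assume "\<not> P dvd [:0,1:] * B"
  with approx obtain z' where "P^(n+1) dvd (g + P^n * t) - ([:0,1:] * z'^2 + A^2)"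
    using hensel_lift_square[OF P two _ n, of "[:0,1:]" B g "A^2"] by (auto simp: add.commute)
  then show ?thesis
    by (auto simp: add.commute intro: representedI)
qed

lemma represented_lift_X_dvd:
  fixes g A B :: "'a::field_gcd poly"
  assumes two: "(2::'a) \<noteq> 0" and n: "n \<ge> 1" and not_dvd: "\<not> [:0,1:]^n dvd g"
    and approx: "[:0,1:]^n dvd g - (A^2 + [:0,1:] * B^2)"
    and "[:0,1:] dvd A" and "\<not> [:0,1:] dvd B"
  shows "represented ([:0,1:]^(n+1)) (g + [:0,1:]^n * t)"
proof -
  \<comment> \<open>An opaque name for \<open>T\<close> keeps the simplifier from rewriting \<open>T * p\<close> to \<open>pCons 0 p\<close>.\<close>
  define X :: "'a poly" where "X = [:0,1:]"
  have X: "prime_elem X"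
    unfolding X_def by (intro irreducible_imp_prime_elem irreducible_linear_field_poly) simp
  obtain A1 where A1: "A = X * A1"
    using \<open>[:0,1:] dvd A\<close> unfolding X_def by (auto elim: dvdE)
  have approx: "X^n dvd g - X * (B^2 + X * A1^2)"
    using approx unfolding A1 X_def[symmetric] by (simp add: algebra_simps power2_eq_square)
  have "X dvd X^n"
    using n by (simp add: dvd_power)
  from this approx have "X dvd g - X * (B^2 + X * A1^2)"
    by (rule dvd_trans)
  then have "X dvd (g - X * (B^2 + X * A1^2)) + X * (B^2 + X * A1^2)"
    by (rule dvd_add) simp
  then obtain g1 where g1: "g = X * g1"
    by (auto elim: dvdE)
  have "n \<noteq> 1"
    using not_dvd g1 unfolding X_def[symmetric] by auto
  then have "n - 1 \<ge> 1" "X^n = X * X^(n-1)"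
    using n by (cases n; simp)+
  moreover from approx have "X * X^(n-1) dvd X * (g1 - (B^2 + X * A1^2))"
    unfolding g1 \<open>X^n = X * X^(n-1)\<close> by (simp add: algebra_simps)
  then have "X^(n-1) dvd g1 - (B^2 + X * A1^2)"
    using X by simp
  ultimately have "represented (X^(n-1+1)) (g1 + X^(n-1) * t)"
    using represented_lift_nonsingular[OF X two] \<open>\<not> [:0,1:] dvd B\<close> unfolding X_def by blast
  then have "represented (X^n) (g1 + X^(n-1) * t)"
    using n by simp
  then have "represented (X * X^n) (X * (g1 + X^(n-1) * t))"
    unfolding X_def represented_times_X_iff .
  moreover have "X * (g1 + X^(n-1) * t) = g + X^n * t"
    using g1 \<open>X^n = X * X^(n-1)\<close> by (simp add: algebra_simps)
  ultimately show ?thesis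
    unfolding X_def by simp
qed

lemma represented_reduce_singular:
  fixes P :: "'a::field_gcd poly"
  assumes P0: "P \<noteq> 0" and not_dvd: "\<not> P^n dvd g"
    and approx: "P^n dvd g - (A^2 + [:0,1:] * B^2)" and "P dvd A" "P dvd B"
  obtains g1 where "3 \<le> n" "g = P^2 * g1" "represented (P^(n-2)) g1" "\<not> P^(n-2) dvd g1"
proof -
  obtain A1 B1 where AB: "A = P * A1" "B = P * B1"
    using \<open>P dvd A\<close> \<open>P dvd B\<close> by (meson dvdE)
  have form: "A^2 + [:0,1:] * B^2 = P^2 * (A1^2 + [:0,1:] * B1^2)"
    unfolding AB by (simp add: algebra_simps power2_eq_square)
  have "n \<ge> 3"
  proof (rule ccontr)
    assume "\<not> n \<ge> 3"
    then have "P^n dvd A^2 + [:0,1:] * B^2"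
      unfolding form by (simp add: le_imp_power_dvd dvd_mult2)
    with approx have "P^n dvd (g - (A^2 + [:0,1:] * B^2)) + (A^2 + [:0,1:] * B^2)"
      by (rule dvd_add)
    with not_dvd show False
      by simp
  qed
  then have "2 + (n - 2) = n"
    by simp
  then have split: "P^n = P^2 * P^(n-2)"
    using power_add[of P 2 "n - 2"] by (simp only:)
  have "P^2 * P^(n-2) dvd g - P^2 * (A1^2 + [:0,1:] * B1^2)"
    using approx unfolding form split .
  then have "P^2 dvd g - P^2 * (A1^2 + [:0,1:] * B1^2)"
    by (rule dvd_mult_left)
  then have "P^2 dvd (g - P^2 * (A1^2 + [:0,1:] * B1^2)) + P^2 * (A1^2 + [:0,1:] * B1^2)"
    by (rule dvd_add) simp
  then obtain g1 where g1: "g = P^2 * g1"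
    by (auto elim: dvdE)
  have "P^2 * P^(n-2) dvd P^2 * (g1 - (A1^2 + [:0,1:] * B1^2))"
    using approx unfolding form g1 split by (simp add: algebra_simps)
  then have "represented (P^(n-2)) g1"
    using P0 by (auto intro: representedI)
  moreover have "\<not> P^(n-2) dvd g1"
    using not_dvd unfolding g1 split by auto
  ultimately show ?thesis
    using that \<open>n \<ge> 3\<close> g1 by blast
qed

text \<open>The singular cases are reduced to a smaller exponent by dividing out \<open>T\<close> (only possible
  when \<open>P = T\<close>) or \<open>P^2\<close>; this is why \<open>P^n\<close> must not divide \<open>g\<close>.\<close>

lemma represented_lift:
  fixes P :: "'a::field_gcd poly"
  assumes P: "prime_elem P" and two: "(2::'a) \<noteq> 0"
    and P_X: "P = [:0,1:] \<or> \<not> P dvd [:0,1:]"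
  shows "n \<ge> 1 \<Longrightarrow> \<not> P^n dvd g \<Longrightarrow> represented (P^n) g \<Longrightarrow> represented (P^(n+1)) (g + P^n * t)"
proof (induction n arbitrary: g rule: less_induct)
  case (less n)
  obtain A B where approx: "P^n dvd g - (A^2 + [:0,1:] * B^2)"
    using less.prems(3) unfolding represented_def by blast
  consider "\<not> P dvd A \<or> \<not> P dvd [:0,1:] * B" | "P = [:0,1:]" "P dvd A" "\<not> P dvd B"
    | "P dvd A" "P dvd B"
    using P_X prime_elem_dvd_mult_iff[OF P, of "[:0,1:]" B] by blast
  then show ?case
  proof cases
    case 1
    then show ?thesis
      using represented_lift_nonsingular[OF P two less.prems(1) approx] by blast
  next
    case 2
    with less.prems(2) approx show ?thesis
      unfolding 2(1) by (intro represented_lift_X_dvd[OF two less.prems(1)])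
  next
    case 3
    then obtain g1 where n: "3 \<le> n" and g1: "g = P^2 * g1"
      and "represented (P^(n-2)) g1" "\<not> P^(n-2) dvd g1"
      using represented_reduce_singular[OF _ less.prems(2) approx] P by auto
    moreover have "n - 2 < n" "1 \<le> n - 2"
      using n by simp_all
    ultimately have "represented (P^(n-2+1)) (g1 + P^(n-2) * t)"
      using less.IH by blast
    then have "represented (P^2 * P^(n-2+1)) (P^2 * (g1 + P^(n-2) * t))"
      by (rule represented_times_square)
    moreover have "2 + (n - 2) = n" "2 + (n - 2 + 1) = n + 1"
      using n by simp_all
    then have "P^(n+1) = P^2 * P^(n-2+1)" "g + P^n * t = P^2 * (g1 + P^(n-2) * t)"
      unfolding g1 by (simp_all add: algebra_simps flip: power_add)
    ultimately show ?thesis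
      by (simp only:)
  qed
qed

definition lift_count :: "'a::field poly \<Rightarrow> nat \<Rightarrow> nat" where
  "lift_count P n = card {t \<in> poly_residues P. represented (P^(n+1)) (P^n * t)}"

lemma represented_power_mult_mod:
  fixes P :: "'a::field poly"
  shows "represented (P^(n+1)) (P^n * (x mod P)) \<longleftrightarrow> represented (P^(n+1)) (P^n * x)"
proof -
  have "P^n * x - P^n * (x mod P) = P^(n+1) * (x div P)"
    by (simp add: minus_mod_eq_mult_div flip: right_diff_distrib mult.assoc)
  then have "P^(n+1) dvd P^n * x - P^n * (x mod P)"
    by simp
  then show ?thesis
    using represented_cong dvd_diff_commute by blast
qed

lemma card_poly_residues_shift:
  fixes P :: "'a::field poly"
  shows "card {t \<in> poly_residues P. Q ((u + t) mod P)} = card {t \<in> poly_residues P. Q t}"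
  by (rule bij_betw_same_card[of "\<lambda>t. (u + t) mod P"], rule bij_betwI[where g = "\<lambda>t. (t - u) mod P"])
    (auto simp: poly_residues_def mod_simps)

subsection \<open>Inert primes\<close>

lemma card_poly_residues_le_twice_image:
  fixes P :: "'a::{finite,field_gcd} poly"
  assumes P: "prime_elem P"
    and fibre: "\<And>x z. x \<in> poly_residues P \<Longrightarrow> z \<in> poly_residues P \<Longrightarrow> F x = F z \<Longrightarrow> P dvd x^2 - z^2"
  shows "card (poly_residues P) \<le> 2 * card (F ` poly_residues P)"
proof (rule card_le_twice_card_image[where g = "\<lambda>x. (- x) mod P"])
  show "finite (poly_residues P)"
    using P by auto
  fix x z
  assume x: "x \<in> poly_residues P" and z: "z \<in> poly_residues P" and "F x = F z"
  have "x^2 - z^2 = (x - z) * (x + z)"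
    by (simp add: algebra_simps power2_eq_square)
  then have "P dvd x - z \<or> P dvd z - (- x)"
    using fibre[OF x z \<open>F x = F z\<close>] P by (simp add: prime_elem_dvd_mult_iff add.commute)
  then have "x mod P = z mod P \<or> z mod P = (- x) mod P"
    by (simp only: mod_eq_dvd_iff)
  then show "z = x \<or> z = (- x) mod P"
    using x z by (auto simp: poly_residues_def)
qed

text \<open>Pigeonhole: the values of \<open>x^2\<close> and of \<open>u - T y^2\<close> modulo \<open>P\<close> each fill more than half of
  the (odd number of) residues, so they meet.\<close>

lemma represented_mod_prime:
  fixes P :: "'a::{finite,field_gcd} poly"
  assumes P: "prime_elem P" and not_dvd_X: "\<not> P dvd [:0,1:]" and odd: "odd (card (poly_residues P))"
  shows "represented P u"
proof -
  let ?R = "poly_residues P"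
  have fin: "finite ?R"
    using P by auto
  define S1 where "S1 = (\<lambda>x. x^2 mod P) ` ?R"
  define S2 where "S2 = (\<lambda>y. (u - [:0,1:] * y^2) mod P) ` ?R"
  have c1: "card ?R \<le> 2 * card S1"
    unfolding S1_def by (rule card_poly_residues_le_twice_image[OF P]) (simp add: mod_eq_dvd_iff)
  have c2: "card ?R \<le> 2 * card S2"
    unfolding S2_def
  proof (rule card_poly_residues_le_twice_image[OF P])
    fix x z
    assume "(u - [:0,1:] * x^2) mod P = (u - [:0,1:] * z^2) mod P"
    then have "P dvd [:0,1:] * (z^2 - x^2)"
      by (simp add: mod_eq_dvd_iff algebra_simps)
    then have "P dvd z^2 - x^2"
      using not_dvd_X prime_elem_dvd_mult_iff[OF P] by blast
    then show "P dvd x^2 - z^2"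
      by (simp only: dvd_diff_commute)
  qed
  have "S1 \<inter> S2 \<noteq> {}"
  proof
    assume "S1 \<inter> S2 = {}"
    moreover have "S1 \<subseteq> ?R" "S2 \<subseteq> ?R"
      unfolding S1_def S2_def by auto
    ultimately have "card S1 + card S2 \<le> card ?R"
      using fin card_Un_disjoint[of S1 S2] card_mono[of ?R "S1 \<union> S2"]
      by (metis finite_subset le_sup_iff order_refl)
    with c1 c2 odd show False
      by presburger
  qed
  then obtain x y where "x^2 mod P = (u - [:0,1:] * y^2) mod P"
    unfolding S1_def S2_def by auto
  then have "P dvd x^2 - (u - [:0,1:] * y^2)"
    by (simp only: mod_eq_dvd_iff)
  also have "x^2 - (u - [:0,1:] * y^2) = - (u - (x^2 + [:0,1:] * y^2))"
    by simp
  finally have "P dvd u - (x^2 + [:0,1:] * y^2)"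
    by (simp only: dvd_minus_iff)
  then show ?thesis
    by (rule representedI)
qed

lemma lift_count_even_if_not_dvd_X:
  fixes P :: "'a::{finite,field_gcd} poly"
  assumes P: "prime_elem P" and "\<not> P dvd [:0,1:]" and "odd (card (poly_residues P))"
    and "even n"
  shows "lift_count P n = card (poly_residues P)"
proof -
  obtain m where m: "n = 2 * m"
    using \<open>even n\<close> by (auto elim: evenE)
  have "represented (P^(n+1)) (P^n * t)" for t
  proof -
    have "represented P t"
      using represented_mod_prime assms by blast
    then have "represented ((P^m)^2 * P) ((P^m)^2 * t)"
      by (rule represented_times_square)
    then show ?thesis
      unfolding m by (simp add: power_mult mult_2 power_add mult_ac)
  qed
  then show ?thesis
    unfolding lift_count_def by simp
qed

lemma dvd_sum_sq_X_imp_dvd: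
  fixes P :: "'a::field_gcd poly"
  assumes P: "prime_elem P" and aniso: "\<forall>x. \<not> P dvd x^2 + [:0,1:]"
    and dvd: "P dvd x^2 + [:0,1:] * y^2"
  shows "P dvd x \<and> P dvd y"
proof -
  have "P dvd y"
  proof (rule ccontr)
    assume "\<not> P dvd y"
    then obtain v where v: "P dvd y * v - 1"
      using inverse_mod_prime_elem[OF P] by blast
    have "(x * v)^2 + [:0,1:]
        = v^2 * (x^2 + [:0,1:] * y^2) - [:0,1:] * (y * v + 1) * (y * v - 1)"
      by (simp add: algebra_simps power2_eq_square)
    moreover have "P dvd v^2 * (x^2 + [:0,1:] * y^2) - [:0,1:] * (y * v + 1) * (y * v - 1)"
      using dvd_mult[OF dvd, of "v^2"] dvd_mult[OF v, of "[:0,1:] * (y * v + 1)"] by (rule dvd_diff)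
    ultimately have "P dvd (x * v)^2 + [:0,1:]"
      by (simp only:)
    with aniso show False
      by blast
  qed
  then have "P dvd y^2"
    by (simp add: power2_eq_square dvd_mult2)
  then have "P dvd (x^2 + [:0,1:] * y^2) - [:0,1:] * y^2"
    using dvd by (intro dvd_diff dvd_mult)
  then have "P dvd x^2"
    by simp
  then have "P dvd x"
    using P prime_elem_dvd_power by blast
  with \<open>P dvd y\<close> show ?thesis
    by simp
qed

lemma power_dvd_sum_sq_X_imp_dvd:
  fixes P :: "'a::field_gcd poly"
  assumes P: "prime_elem P" and aniso: "\<forall>x. \<not> P dvd x^2 + [:0,1:]"
  shows "P^(2*m+1) dvd x^2 + [:0,1:] * y^2 \<Longrightarrow> P^(m+1) dvd x \<and> P^(m+1) dvd y"
proof (induction m arbitrary: x y)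
  case 0
  then have "P dvd x^2 + [:0,1:] * y^2"
    by (simp only: mult_0_right add_0 power_one_right)
  then have "P dvd x \<and> P dvd y"
    by (rule dvd_sum_sq_X_imp_dvd[OF P aniso])
  then show ?case
    by (simp only: add_0 power_one_right)
next
  case (Suc m)
  have P0: "P^2 \<noteq> 0"
    using prime_elem_not_zeroI[OF P] by simp
  have "P dvd x^2 + [:0,1:] * y^2"
    using Suc.prems by (rule dvd_trans[rotated]) (simp add: dvd_power)
  then have "P dvd x \<and> P dvd y"
    by (rule dvd_sum_sq_X_imp_dvd[OF P aniso])
  then obtain x1 y1 where xy: "x = P * x1" "y = P * y1"
    by (meson dvdE)
  have "2 * Suc m + 1 = 2 + (2 * m + 1)"
    by simp
  then have split_power: "P^(2 * Suc m + 1) = P^2 * P^(2 * m + 1)"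
    by (simp only: power_add)
  have split_form: "x^2 + [:0,1:] * y^2 = P^2 * (x1^2 + [:0,1:] * y1^2)"
    unfolding xy by (simp add: algebra_simps power2_eq_square)
  have "P^2 * P^(2 * m + 1) dvd P^2 * (x1^2 + [:0,1:] * y1^2)"
    using Suc.prems unfolding split_power split_form .
  then have "P^(2 * m + 1) dvd x1^2 + [:0,1:] * y1^2"
    by (simp only: dvd_times_left_cancel_iff[OF P0])
  then have "P^(m+1) dvd x1 \<and> P^(m+1) dvd y1"
    by (rule Suc.IH)
  then have "P * P^(m+1) dvd x \<and> P * P^(m+1) dvd y"
    unfolding xy using mult_dvd_mono[OF dvd_refl[of P]] by blast
  then show ?case
    by simp
qed

lemma lift_count_odd_if_anisotropic:
  fixes P :: "'a::{finite,field_gcd} poly"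
  assumes P: "prime_elem P" and aniso: "\<forall>x. \<not> P dvd x^2 + [:0,1:]" and "odd n"
  shows "lift_count P n = 1"
proof -
  obtain m where m: "n = 2 * m + 1"
    using \<open>odd n\<close> by (auto elim: oddE)
  have P_sq: "(P^(m+1))^2 = P^(n+1)"
    unfolding m power_mult[symmetric] by (rule arg_cong[where f = "\<lambda>k. P^k"]) simp
  have "P dvd t" if rep: "represented (P^(n+1)) (P^n * t)" for t
  proof -
    obtain A B where AB: "P^(n+1) dvd P^n * t - (A^2 + [:0,1:] * B^2)"
      using rep unfolding represented_def by blast
    then have "P^n dvd P^n * t - (A^2 + [:0,1:] * B^2)"
      by (rule dvd_trans[rotated]) (simp add: le_imp_power_dvd)
    then have "P^n dvd P^n * t - (P^n * t - (A^2 + [:0,1:] * B^2))"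
      by (rule dvd_diff[OF dvd_triv_left])
    then have "P^(2 * m + 1) dvd A^2 + [:0,1:] * B^2"
      unfolding m by (simp only: diff_diff_eq2 add_diff_cancel_left')
    then obtain a b where "A = P^(m+1) * a" "B = P^(m+1) * b"
      using power_dvd_sum_sq_X_imp_dvd[OF P aniso] by (meson dvdE)
    then have "A^2 + [:0,1:] * B^2 = (P^(m+1))^2 * (a^2 + [:0,1:] * b^2)"
      by (simp add: power_mult_distrib algebra_simps)
    then have "P^(n+1) dvd A^2 + [:0,1:] * B^2"
      unfolding P_sq by simp
    from dvd_add[OF AB this] have "P^(n+1) dvd P^n * t"
      by (simp only: diff_add_cancel)
    then have "P^n * P dvd P^n * t"
      by (simp only: Suc_eq_plus1[symmetric] power_Suc2)
    then show "P dvd t"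
      using prime_elem_not_zeroI[OF P] by simp
  qed
  then have "{t \<in> poly_residues P. represented (P^(n+1)) (P^n * t)} = {0}"
    by (auto simp: poly_residues_def dvd_eq_mod_eq_0 intro: represented_if_dvd)
  then show ?thesis
    unfolding lift_count_def by simp
qed

subsection \<open>The ramified prime \<open>T\<close>\<close>

lemma monic_irreducible_dvd_X_imp_eq_X:
  fixes P :: "'a::field poly"
  assumes monic: "lead_coeff P = 1" and irreducible: "irreducible P" and "P dvd [:0,1:]"
  shows "P = [:0,1:]"
proof -
  obtain Q where Q: "[:0,1:] = P * Q"
    using \<open>P dvd [:0,1:]\<close> by (auto elim: dvdE)
  have "irreducible ([:0,1:] :: 'a poly)"
    by (rule irreducible_linear_field_poly) simp
  then have "is_unit P \<or> is_unit Q"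
    using Q by (rule irreducibleD)
  then have "is_unit Q"
    using irreducible by (auto simp: irreducible_def)
  then obtain c where "Q = [:c:]"
    by (auto elim: is_unit_polyE)
  moreover have "lead_coeff ([:0,1:] :: 'a poly) = lead_coeff P * lead_coeff Q"
    unfolding Q by (rule lead_coeff_mult)
  ultimately have "c = 1"
    using monic by simp
  with Q \<open>Q = [:c:]\<close> show ?thesis
    by simp
qed

lemma monic_irreducible_X_dvd_imp_eq_X:
  fixes P :: "'a::field poly"
  assumes monic: "lead_coeff P = 1" and irreducible: "irreducible P" and "[:0,1:] dvd P"
  shows "P = [:0,1:]"
proof -
  obtain Q where Q: "P = [:0,1:] * Q"
    using \<open>[:0,1:] dvd P\<close> by (auto elim: dvdE)
  moreover have "\<not> is_unit ([:0,1:] :: 'a poly)"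
    by (simp add: is_unit_poly_iff)
  ultimately have "is_unit Q"
    using irreducible irreducibleD by blast
  then obtain c where "Q = [:c:]"
    by (auto elim: is_unit_polyE)
  moreover have "lead_coeff P = lead_coeff ([:0,1:] :: 'a poly) * lead_coeff Q"
    unfolding Q by (rule lead_coeff_mult)
  ultimately have "c = 1"
    using monic by simp
  with Q \<open>Q = [:c:]\<close> show ?thesis
    by simp
qed

lemma represented_X_power_const_iff:
  fixes c :: "'a::field"
  shows "represented ([:0,1:]^(n+1)) ([:0,1:]^n * [:c:]) \<longleftrightarrow> (\<exists>s. c = s^2)"
proof (induction n)
  case 0
  have "represented [:0,1:] [:c:] \<longleftrightarrow> (\<exists>A. c = (coeff A 0)^2)"
    unfolding represented_def X_dvd_iff by (simp add: coeff_mult_0 power2_eq_square)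
  also have "\<dots> \<longleftrightarrow> (\<exists>s. c = s^2)"
    by (metis coeff_pCons_0)
  finally show ?case
    by simp
next
  case (Suc n)
  then show ?case
    using represented_times_X_iff[of "[:0,1:]^(n+1)" "[:0,1:]^n * [:c:]"] by (simp add: mult.assoc)
qed

lemma poly_residues_X: "poly_residues [:0,1:] = range (\<lambda>c. [:c:])"
proof (intro equalityI subsetI)
  fix r
  assume "r \<in> poly_residues [:0,1:]"
  then have "degree r = 0"
    by (auto simp: poly_residues_iff_degree)
  then show "r \<in> range (\<lambda>c. [:c:])"
    by (metis degree_0_id rangeI)
qed (auto simp: poly_residues_iff_degree)

lemma lift_count_X:
  "lift_count ([:0,1:] :: 'a::{finite,field} poly) n = card (range (\<lambda>s::'a. s^2))"
proof -
  have "{t \<in> poly_residues [:0,1:]. represented ([:0,1:]^(n+1)) ([:0,1:]^n * t)}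
      = (\<lambda>c. [:c:]) ` range (\<lambda>s::'a. s^2)"
    unfolding poly_residues_X using represented_X_power_const_iff by fastforce
  then show ?thesis
    unfolding lift_count_def by (simp add: card_image inj_on_def)
qed

section \<open>When \<open>-T\<close> is a square modulo \<open>P\<close>\<close>

definition negate_var :: "'a::comm_ring_1 poly \<Rightarrow> 'a poly" where
  "negate_var f = pcompose f [:0, -1:]"

lemma negate_var_mult: "negate_var (f * g) = negate_var f * negate_var g"
  by (simp add: negate_var_def pcompose_mult)

lemma negate_var_add: "negate_var (f + g) = negate_var f + negate_var g"
  by (simp add: negate_var_def pcompose_add)

lemma negate_var_diff: "negate_var (f - g) = negate_var f - negate_var g"
  by (simp add: negate_var_def pcompose_diff)

lemma negate_var_X: "negate_var [:0,1:] = - [:0,1:]"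
  by (simp add: negate_var_def pcompose_pCons)

lemma negate_var_negate_var [simp]: "negate_var (negate_var f) = f"
  by (simp add: negate_var_def pcompose_assoc[symmetric] pcompose_pCons)

lemma negate_var_eq_0_iff [simp]: "negate_var f = 0 \<longleftrightarrow> f = 0"
  by (metis negate_var_negate_var negate_var_def pcompose_0)

lemma degree_negate_var [simp]: "degree (negate_var (f::'a::idom poly)) = degree f"
  by (simp add: negate_var_def degree_pcompose)

lemma lead_coeff_negate_var:
  "lead_coeff (negate_var (f::'a::idom poly)) = (-1) ^ degree f * lead_coeff f"
  unfolding negate_var_def by (subst lead_coeff_comp) simp_all

lemma coeff_0_negate_var [simp]: "coeff (negate_var f) 0 = coeff f 0"
  by (simp add: negate_var_def poly_0_coeff_0[symmetric] poly_pcompose)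

lemma negate_var_dvd: "f dvd g \<Longrightarrow> negate_var f dvd negate_var g"
  by (auto elim!: dvdE simp: negate_var_mult)

lemma negate_var_pcompose_neg_square:
  "negate_var (pcompose f [:0, 0, -1:]) = pcompose f [:0, 0, -1:]"
  by (simp add: negate_var_def pcompose_assoc[symmetric] pcompose_pCons)

lemma mutual_dvd_imp_smult:
  fixes a b :: "'a::field poly"
  assumes "a dvd b" and "b dvd a" and "a \<noteq> 0"
  shows "\<exists>c. c \<noteq> 0 \<and> b = smult c a"
proof -
  obtain k where "b = a * k"
    using assms(1) by (auto elim: dvdE)
  moreover have "a * k dvd a * 1"
    using assms(2) \<open>b = a * k\<close> by simp
  then have "is_unit k"
    using assms(3) by simp
  then obtain c where "k = [:c:]" "c dvd 1"
    by (rule is_unit_polyE)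
  ultimately show ?thesis
    by (intro exI[of _ c]) (auto simp: mult.commute)
qed

lemma dvd_gcd_mult:
  fixes Q f g :: "'a::field_gcd poly"
  assumes "Q dvd f * g"
  shows "Q dvd gcd Q f * g"
proof -
  have "Q dvd gcd (g * f) (g * Q)"
    using assms by (simp add: mult.commute)
  also have "gcd (g * f) (g * Q) = normalize g * gcd f Q"
    by (rule gcd_mult_distrib'[symmetric])
  also have "normalize g * gcd f Q dvd g * gcd Q f"
    by (simp add: gcd.commute mult_dvd_mono)
  finally show ?thesis
    by (simp add: mult.commute)
qed

lemma coprime_gcd_diff_X_gcd_add_X:
  fixes Q X :: "'a::field_gcd poly"
  assumes two: "(2::'a) \<noteq> 0" and not_X_dvd: "\<not> [:0,1:] dvd Q"
  shows "coprime (gcd Q (X - [:0,1:])) (gcd Q (X + [:0,1:]))"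
proof (rule coprimeI)
  fix D
  assume minus: "D dvd gcd Q (X - [:0,1:])" and plus: "D dvd gcd Q (X + [:0,1:])"
  then have "D dvd Q"
    using dvd_trans gcd_dvd1 by blast
  moreover have "D dvd (X + [:0,1:]) - (X - [:0,1:])"
    using dvd_trans[OF plus gcd_dvd2] dvd_trans[OF minus gcd_dvd2] by (rule dvd_diff)
  moreover have "(X + [:0,1:]) - (X - [:0,1:]) = smult 2 [:0,1:]"
    by (simp add: numeral_2_eq_2 smult_add_left)
  ultimately have "D dvd Q" "D dvd [:0,1:]"
    using dvd_smult_iff[OF two, of D "[:0,1:]"] by simp_all
  moreover have "coprime [:0,1:] Q"
    using not_X_dvd by (simp add: prime_elem_imp_coprime irreducible_imp_prime_elem
        irreducible_linear_field_poly)
  ultimately show "is_unit D"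
    using coprime_common_divisor by blast
qed

text \<open>The two factors \<open>gcd Q (X \<mp> T)\<close> are exchanged by \<open>T \<mapsto> -T\<close>, and their product is \<open>Q\<close> up
  to a unit because they are coprime.\<close>

lemma factor_times_negate_var:
  fixes Q X :: "'a::field_gcd poly"
  assumes two: "(2::'a) \<noteq> 0" and Q0: "Q \<noteq> 0" and not_X_dvd: "\<not> [:0,1:] dvd Q"
    and Q_inv: "negate_var Q = Q" and X_inv: "negate_var X = X"
    and dvd: "Q dvd (X - [:0,1:]) * (X + [:0,1:])"
  shows "\<exists>A c. c \<noteq> 0 \<and> Q = smult c (A * negate_var A)"
proof -
  define A where "A = gcd Q (X - [:0,1:])"
  define B where "B = gcd Q (X + [:0,1:])"
  have minus: "negate_var (X - [:0,1:]) = X + [:0,1:]" and plus: "negate_var (X + [:0,1:]) = X - [:0,1:]"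
    by (simp_all add: negate_var_diff negate_var_add X_inv negate_var_X)
  have "negate_var A dvd negate_var Q" "negate_var A dvd negate_var (X - [:0,1:])"
    unfolding A_def by (intro negate_var_dvd; simp)+
  then have "negate_var A dvd B"
    unfolding B_def Q_inv minus by (rule gcd_greatest)
  moreover have "negate_var B dvd negate_var Q" "negate_var B dvd negate_var (X + [:0,1:])"
    unfolding B_def by (intro negate_var_dvd; simp)+
  then have "negate_var B dvd A"
    unfolding A_def Q_inv plus by (rule gcd_greatest)
  then have "B dvd negate_var A"
    using negate_var_dvd by fastforce
  moreover have "negate_var A \<noteq> 0"
    using Q0 by (simp add: A_def)
  ultimately obtain c2 where c2: "c2 \<noteq> 0" "B = smult c2 (negate_var A)"
    using mutual_dvd_imp_smult by blast
  have "coprime A B"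
    unfolding A_def B_def using two not_X_dvd by (rule coprime_gcd_diff_X_gcd_add_X)
  then have "A * B dvd Q"
    unfolding A_def B_def by (intro divides_mult) auto
  moreover have "Q dvd A * B"
    using dvd_gcd_mult[OF dvd_gcd_mult[OF dvd, unfolded mult.commute[of _ "X + [:0,1:]"]]]
    unfolding A_def B_def by (simp add: mult.commute)
  moreover have "A * B \<noteq> 0"
    using Q0 by (simp add: A_def B_def)
  ultimately obtain c1 where "c1 \<noteq> 0" "Q = smult c1 (A * B)"
    using mutual_dvd_imp_smult by blast
  with c2 show ?thesis
    by (intro exI[of _ A] exI[of _ "c1 * c2"]) (simp add: mult_smult_right)
qed

text \<open>Substituting \<open>T \<mapsto> -T^2\<close> turns \<open>P \<mid> x^2 + T\<close> into \<open>Q \<mid> X^2 - T^2\<close> with \<open>Q(T) = P(-T^2)\<close>;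
  comparing constant and leading coefficients in \<open>Q = c A(T) A(-T)\<close> gives
  \<open>P(0) = (A(0) / lc A)^2\<close>.\<close>

lemma coeff_0_square_if_dvd_square_plus_X:
  fixes P :: "'a::field_gcd poly"
  assumes monic: "lead_coeff P = 1" and two: "(2::'a) \<noteq> 0"
    and coeff0: "coeff P 0 \<noteq> 0" and dvd: "P dvd x^2 + [:0,1:]"
  shows "\<exists>c. coeff P 0 = c^2"
proof -
  define Q where "Q = pcompose P [:0, 0, -1:]"
  define X where "X = pcompose x [:0, 0, -1:]"
  have Q_coeff0: "coeff Q 0 = coeff P 0"
    unfolding Q_def by (simp add: poly_0_coeff_0[symmetric] poly_pcompose)
  have "Q dvd pcompose (x^2 + [:0,1:]) [:0, 0, -1:]"
    using dvd unfolding Q_def by (auto elim!: dvdE simp: pcompose_mult)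
  also have "pcompose (x^2 + [:0,1:]) [:0, 0, -1:] = (X - [:0,1:]) * (X + [:0,1:])"
    unfolding X_def by (simp add: pcompose_add pcompose_mult pcompose_pCons power2_eq_square algebra_simps)
  finally have "Q dvd (X - [:0,1:]) * (X + [:0,1:])" .
  moreover have "\<not> [:0,1:] dvd Q" "Q \<noteq> 0"
    using coeff0 Q_coeff0 by (auto simp: X_dvd_iff)
  moreover have "negate_var Q = Q" "negate_var X = X"
    unfolding Q_def X_def by (rule negate_var_pcompose_neg_square)+
  ultimately obtain A c where c: "c \<noteq> 0" and QA: "Q = smult c (A * negate_var A)"
    using factor_times_negate_var[OF two] by blast
  have "degree Q = 2 * degree P"
    unfolding Q_def by (simp add: degree_pcompose)
  moreover have lead_Q: "lead_coeff Q = (-1) ^ degree P"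
    unfolding Q_def by (subst lead_coeff_comp) (simp_all add: monic)
  moreover have "A \<noteq> 0"
    using QA Q_coeff0 coeff0 by auto
  ultimately have "degree A = degree P"
    using QA c by (simp add: degree_mult_eq)
  have "lead_coeff Q = c * (lead_coeff A * ((-1) ^ degree A * lead_coeff A))"
    unfolding QA by (simp only: lead_coeff_smult lead_coeff_mult lead_coeff_negate_var)
  then have "(-1) ^ degree P = c * (lead_coeff A)^2 * (-1) ^ degree P"
    using lead_Q \<open>degree A = degree P\<close>
    by (simp add: power2_eq_square mult_ac)
  then have "c * (lead_coeff A)^2 = 1"
    by simp
  moreover have "coeff P 0 = c * (coeff A 0)^2"
    using QA Q_coeff0 by (simp add: coeff_mult_0 power2_eq_square)
  ultimately have "coeff P 0 = (coeff A 0 / lead_coeff A)^2"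
    using \<open>A \<noteq> 0\<close> by (auto simp: power_divide field_simps)
  then show ?thesis
    by blast
qed

lemma Omega_qh_iff: "s \<in> Omega_qh hs M \<longleftrightarrow> s \<in> A_qh hs M \<and> (\<exists>i<length hs. M dvd s + hs ! i)"
  unfolding Omega_qh_def by (auto simp: dvd_eq_mod_eq_0)

lemma Omega_star_qh_iff:
  "s \<in> Omega_star_qh hs M \<longleftrightarrow> s \<in> A_qh hs M \<and> (\<forall>i<length hs. \<not> M dvd s + hs ! i)"
  unfolding Omega_star_qh_def by (auto simp: dvd_eq_mod_eq_0)

lemma A_qh_eq_Un_Omega: "A_qh hs M = Omega_star_qh hs M \<union> Omega_qh hs M"
  by (auto simp: Omega_qh_iff Omega_star_qh_iff)

lemma Omega_star_qh_Int_Omega_qh: "Omega_star_qh hs M \<inter> Omega_qh hs M = {}"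
  by (auto simp: Omega_qh_iff Omega_star_qh_iff)

lemma finite_A_qh: "M \<noteq> 0 \<Longrightarrow> finite (A_qh hs (M::'a::{finite,field_gcd} poly))"
  by (rule finite_subset[of _ "poly_residues M"]) (auto simp: A_qh_iff)

lemma card_A_qh_eq_add:
  "M \<noteq> 0 \<Longrightarrow> card (A_qh hs (M::'a::{finite,field_gcd} poly))
     = card (Omega_star_qh hs M) + card (Omega_qh hs M)"
  using finite_A_qh[of M hs] unfolding A_qh_eq_Un_Omega
  by (intro card_Un_disjoint Omega_star_qh_Int_Omega_qh) auto

section \<open>Solving the recursion\<close>

text \<open>\<open>\<alpha>\<close> is a bounded solution of the inhomogeneous part of the recursion; it makes the
  remaining homogeneous part geometric.\<close>

lemma recurrence_closed_form:
  fixes N \<alpha> E :: "nat \<Rightarrow> real"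
  assumes rec: "\<And>n. n \<ge> m \<Longrightarrow> N (Suc n) = p * (N n - Z) + E n * Z"
    and \<alpha>: "\<And>n. \<alpha> (Suc n) = p * \<alpha> n - p + E n"
    and "m \<le> n"
  shows "N n = p^(n - m) * (N m - \<alpha> m * Z) + \<alpha> n * Z"
  using \<open>m \<le> n\<close>
proof (induction n rule: dec_induct)
  case (step n)
  then have "N (Suc n) = p * (p^(n - m) * (N m - \<alpha> m * Z) + \<alpha> n * Z - Z) + E n * Z"
    by (simp add: rec)
  also have "\<dots> = p^(Suc n - m) * (N m - \<alpha> m * Z) + \<alpha> (Suc n) * Z"
    using step.hyps by (simp add: \<alpha> Suc_diff_le algebra_simps)
  finally show ?case .
qed simp

lemma LIMSEQ_recurrence:
  fixes N \<alpha> E :: "nat \<Rightarrow> real"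
  assumes p: "p > 1"
    and rec: "\<And>n. n \<ge> m \<Longrightarrow> N (Suc n) = p * (N n - Z) + E n * Z"
    and \<alpha>: "\<And>n. \<alpha> (Suc n) = p * \<alpha> n - p + E n" and bounded: "\<And>n. \<bar>\<alpha> n\<bar> \<le> 1"
  shows "(\<lambda>n. N n / p^n) \<longlonglongrightarrow> (N m - \<alpha> m * Z) / p^m"
proof -
  have "(\<lambda>n. \<alpha> n * Z / p^n) \<longlonglongrightarrow> 0"
  proof (rule Lim_null_comparison[OF _ LIMSEQ_divide_realpow_zero[OF p, of "\<bar>Z\<bar>"]])
    have "\<bar>\<alpha> n\<bar> * (\<bar>Z\<bar> / p^n) \<le> 1 * (\<bar>Z\<bar> / p^n)" for n
      using bounded p by (intro mult_right_mono) auto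
    then show "\<forall>\<^sub>F n in sequentially. norm (\<alpha> n * Z / p^n) \<le> \<bar>Z\<bar> / p^n"
      using p by (intro always_eventually allI) (simp add: abs_mult)
  qed
  then have "(\<lambda>n. (N m - \<alpha> m * Z) / p^m + \<alpha> n * Z / p^n) \<longlonglongrightarrow> (N m - \<alpha> m * Z) / p^m"
    using tendsto_add[OF tendsto_const] by fastforce
  moreover have "\<forall>\<^sub>F n in sequentially. (N m - \<alpha> m * Z) / p^m + \<alpha> n * Z / p^n = N n / p^n"
  proof (rule eventually_sequentiallyI[of m])
    fix n
    assume "m \<le> n"
    then have "p^n = p^(n - m) * p^m"
      by (simp flip: power_add)
    then have "p^(n - m) * (N m - \<alpha> m * Z) / p^n = (N m - \<alpha> m * Z) / p^m"
      using p by simp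
    moreover have "N n = p^(n - m) * (N m - \<alpha> m * Z) + \<alpha> n * Z"
      using rec \<alpha> \<open>m \<le> n\<close> by (rule recurrence_closed_form)
    ultimately show "(N m - \<alpha> m * Z) / p^m + \<alpha> n * Z / p^n = N n / p^n"
      by (simp add: add_divide_distrib)
  qed
  ultimately show ?thesis
    by (rule Lim_transform_eventually)
qed

section \<open>Counting lifts\<close>

lemma lift_in_A_qh_iff:
  fixes P :: "'a::{finite,field_gcd} poly"
  assumes "P \<noteq> 0" and "s \<in> poly_residues (P^n)" "t \<in> poly_residues P"
  shows "s + P^n * t \<in> A_qh hs (P^(n+1))
    \<longleftrightarrow> (\<forall>i<length hs. represented (P^(n+1)) (s + P^n * t + hs ! i))"
  using bij_betw_apply[OF bij_betw_lift[OF assms(1)], of "(s, t)" n] assms(2,3) by (simp add: A_qh_iff)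


lemma represented_of_lift:
  fixes P :: "'a::comm_ring_1 poly"
  assumes "represented (P^(n+1)) (s + P^n * t + h)"
  shows "represented (P^n) (s + h)"
proof -
  have "represented (P^n) (s + P^n * t + h)"
    using assms by (rule represented_dvd[rotated]) (simp add: le_imp_power_dvd)
  moreover have "P^n dvd (s + P^n * t + h) - (s + h)"
    by simp
  ultimately show ?thesis
    using represented_cong by blast
qed


lemma dvd_shift_if_dvd_lift:
  fixes P :: "'a::comm_ring_1"
  assumes "P^(n+1) dvd s + P^n * t + h"
  shows "P^n dvd s + h"
proof -
  have "P^n dvd s + P^n * t + h"
    using assms by (rule dvd_trans[rotated]) (simp add: le_imp_power_dvd)
  then have "P^n dvd (s + P^n * t + h) - P^n * t"
    by (rule dvd_diff) simp
  then show ?thesis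
    by (simp add: algebra_simps)
qed


lemma lifts_A_qh_outside:
  fixes P :: "'a::{finite,field_gcd} poly"
  assumes "P \<noteq> 0" and s: "s \<in> poly_residues (P^n)" and "s \<notin> A_qh hs (P^n)"
  shows "lifts P n (A_qh hs (P^(n+1))) s = {}"
proof -
  have "s \<in> A_qh hs (P^n)" if "t \<in> lifts P n (A_qh hs (P^(n+1))) s" for t
  proof -
    from that have "t \<in> poly_residues P" "s + P^n * t \<in> A_qh hs (P^(n+1))"
      by (auto simp: lifts_def)
    then have "\<forall>i<length hs. represented (P^(n+1)) (s + P^n * t + hs ! i)"
      using lift_in_A_qh_iff[OF assms(1) s] by blast
    then show ?thesis
      using s represented_of_lift[of P n s t] by (simp add: A_qh_iff)
  qed
  with assms(3) show ?thesis
    by blast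
qed

lemma lifts_Omega_qh_Omega_star:
  fixes P :: "'a::{finite,field_gcd} poly"
  assumes "s \<in> Omega_star_qh hs (P^n)"
  shows "lifts P n (Omega_qh hs (P^(n+1))) s = {}"
  using assms dvd_shift_if_dvd_lift by (fastforce simp: lifts_def Omega_qh_iff Omega_star_qh_iff)


locale density_setting =
  fixes P :: "'a::{finite,field_gcd} poly" and hs :: "'a poly list" and \<nu> :: nat
  assumes odd_card: "odd CARD('a)" and monic: "lead_coeff P = 1" and irreducible: "irreducible P"
    and distinct: "distinct hs" and nu_h_less: "nu_h hs P < \<nu>"
begin

lemma prime: "prime_elem P"
  using irreducible by (rule irreducible_imp_prime_elem)

lemma nonzero: "P \<noteq> 0"
  using prime by (rule prime_elem_not_zeroI)

lemma two_neq_zero: "(2::'a) \<noteq> 0"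
  using odd_card by (rule two_neq_zero_if_odd_card)

lemma eq_X_or_not_dvd_X: "P = [:0,1:] \<or> \<not> P dvd [:0,1:]"
  using monic_irreducible_dvd_X_imp_eq_X[OF monic irreducible] by blast

lemma card_poly_residues_odd: "odd (card (poly_residues P))"
  using odd_card by (simp add: card_poly_residues[OF nonzero])

lemma absP_eq_card: "absP P = real (card (poly_residues P))"
  by (simp add: absP_def card_poly_residues[OF nonzero])

lemma absP_gt_1: "absP P > 1"
proof -
  have "degree P > 0"
    using prime_elem_not_unit[OF prime] is_unit_iff_degree[OF nonzero] by simp
  moreover have "CARD('a) > 1"
    using card_mono[of UNIV "{0::'a, 1}"] by simp
  ultimately show ?thesis
    unfolding absP_def by simp
qed

lemma nu_pos: "\<nu> \<ge> 1"
  using nu_h_less by simp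

lemma not_power_dvd_diff:
  assumes "i < length hs" "j < length hs" "i \<noteq> j"
  shows "\<not> P^\<nu> dvd hs ! i - hs ! j"
proof
  assume dvd: "P^\<nu> dvd hs ! i - hs ! j"
  have "hs ! i - hs ! j \<noteq> 0"
    using distinct assms by (simp add: nth_eq_iff_index_eq)
  then have "\<nu> \<le> multiplicity P (hs ! i - hs ! j)"
    using dvd prime by (intro multiplicity_geI) (auto dest: prime_elem_not_unit)
  moreover have "finite {multiplicity P (hs ! i - hs ! j) | i j.
      i < length hs \<and> j < length hs \<and> i \<noteq> j}"
    by (rule finite_subset[where B = "(\<lambda>(i, j). multiplicity P (hs ! i - hs ! j)) `
        ({..<length hs} \<times> {..<length hs})"]) auto
  then have "multiplicity P (hs ! i - hs ! j) \<le> nu_h hs P"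
    unfolding nu_h_def using assms by (intro Max_ge) auto
  ultimately show False
    using nu_h_less by simp
qed

lemma unique_shift_dvd:
  assumes "\<nu> \<le> n" "i < length hs" "j < length hs"
    and "P^n dvd s + hs ! i" "P^n dvd s + hs ! j"
  shows "i = j"
proof (rule ccontr)
  assume "i \<noteq> j"
  have "P^\<nu> dvd P^n"
    using assms(1) by (rule le_imp_power_dvd)
  moreover have "P^n dvd hs ! i - hs ! j"
    using dvd_diff[OF assms(4,5)] by simp
  ultimately show False
    using not_power_dvd_diff[OF assms(2,3) \<open>i \<noteq> j\<close>] dvd_trans by blast
qed

lemma represented_lift_shift:
  assumes "\<nu> \<le> n" and "s \<in> A_qh hs (P^n)" and "i < length hs" and "\<not> P^n dvd s + hs ! i"
  shows "represented (P^(n+1)) (s + P^n * t + hs ! i)"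
proof -
  have "represented (P^n) (s + hs ! i)"
    using assms(2,3) by (simp add: A_qh_iff)
  then have "represented (P^(n+1)) ((s + hs ! i) + P^n * t)"
    using represented_lift[OF prime two_neq_zero eq_X_or_not_dvd_X] nu_pos assms(1,4) by simp
  then show ?thesis
    by (simp add: add_ac)
qed

lemma lifts_A_qh_Omega_star:
  assumes "\<nu> \<le> n" and "s \<in> Omega_star_qh hs (P^n)"
  shows "lifts P n (A_qh hs (P^(n+1))) s = poly_residues P"
proof -
  have sA: "s \<in> A_qh hs (P^n)" and sR: "s \<in> poly_residues (P^n)"
    and free: "\<forall>i<length hs. \<not> P^n dvd s + hs ! i"
    using assms(2) by (auto simp: Omega_star_qh_iff A_qh_iff)
  have "s + P^n * t \<in> A_qh hs (P^(n+1))" if "t \<in> poly_residues P" for t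
    using lift_in_A_qh_iff[OF nonzero sR that] represented_lift_shift[OF assms(1) sA] free by blast
  then show ?thesis
    by (auto simp: lifts_def)
qed

text \<open>For \<open>s \<in> \<Omega>\<close> exactly one shift \<open>s + h\<^sub>i\<close> is divisible by \<open>P^n\<close>; the others lift freely, so
  whether \<open>s + P^n t\<close> survives depends only on \<open>t + (s + h\<^sub>i) / P^n\<close> modulo \<open>P\<close>.\<close>

lemma lifts_Omega_qh:
  assumes "\<nu> \<le> n" and s: "s \<in> Omega_qh hs (P^n)"
    and i: "i < length hs" and u: "s + hs ! i = P^n * u"
  shows "lifts P n (A_qh hs (P^(n+1))) s
      = {t \<in> poly_residues P. represented (P^(n+1)) (P^n * ((u + t) mod P))}"
    and "lifts P n (Omega_qh hs (P^(n+1))) s = {t \<in> poly_residues P. (u + t) mod P = 0}"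
proof -
  have sA: "s \<in> A_qh hs (P^n)" and sR: "s \<in> poly_residues (P^n)"
    using s by (auto simp: Omega_qh_iff A_qh_iff)
  have unique: "j = i" if "j < length hs" "P^n dvd s + hs ! j" for j
    using unique_shift_dvd[OF assms(1) that(1) i that(2)] u by simp
  have shift: "s + P^n * t + hs ! i = P^n * (u + t)" for t
    using u by (simp add: algebra_simps)
  have "(\<forall>j<length hs. represented (P^(n+1)) (s + P^n * t + hs ! j))
      \<longleftrightarrow> represented (P^(n+1)) (s + P^n * t + hs ! i)" for t
    using i represented_lift_shift[OF assms(1) sA] unique by blast
  then have A_iff: "s + P^n * t \<in> A_qh hs (P^(n+1))
      \<longleftrightarrow> represented (P^(n+1)) (P^n * ((u + t) mod P))" if "t \<in> poly_residues P" for t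
    unfolding lift_in_A_qh_iff[OF nonzero sR that] shift represented_power_mult_mod by simp
  then show "lifts P n (A_qh hs (P^(n+1))) s
      = {t \<in> poly_residues P. represented (P^(n+1)) (P^n * ((u + t) mod P))}"
    by (auto simp: lifts_def)
  have dvd_iff: "P^(n+1) dvd s + P^n * t + hs ! i \<longleftrightarrow> (u + t) mod P = 0" for t
    unfolding shift using nonzero by (simp add: dvd_eq_mod_eq_0[symmetric] power_Suc2 del: power_Suc)
  have "s + P^n * t \<in> Omega_qh hs (P^(n+1)) \<longleftrightarrow> (u + t) mod P = 0"
    if "t \<in> poly_residues P" for t
  proof
    assume "s + P^n * t \<in> Omega_qh hs (P^(n+1))"
    then obtain j where "j < length hs" "P^(n+1) dvd s + P^n * t + hs ! j"
      by (auto simp: Omega_qh_iff)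
    then show "(u + t) mod P = 0"
      using unique dvd_shift_if_dvd_lift dvd_iff by blast
  next
    assume "(u + t) mod P = 0"
    then show "s + P^n * t \<in> Omega_qh hs (P^(n+1))"
      using A_iff[OF that] dvd_iff i by (auto simp: Omega_qh_iff represented_if_dvd)
  qed
  then show "lifts P n (Omega_qh hs (P^(n+1))) s = {t \<in> poly_residues P. (u + t) mod P = 0}"
    by (auto simp: lifts_def)
qed

lemma card_lifts_Omega_qh:
  assumes "\<nu> \<le> n" and s: "s \<in> Omega_qh hs (P^n)"
  shows "card (lifts P n (A_qh hs (P^(n+1))) s) = lift_count P n"
    and "card (lifts P n (Omega_qh hs (P^(n+1))) s) = 1"
proof -
  obtain i u where "i < length hs" "s + hs ! i = P^n * u"
    using s by (auto simp: Omega_qh_iff elim!: dvdE)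
  note lifts = lifts_Omega_qh[OF assms this]
  show "card (lifts P n (A_qh hs (P^(n+1))) s) = lift_count P n"
    unfolding lifts(1) lift_count_def
    by (rule card_poly_residues_shift[where Q = "\<lambda>x. represented (P^(n+1)) (P^n * x)"])
  show "card (lifts P n (Omega_qh hs (P^(n+1))) s) = 1"
    unfolding lifts(2) using card_poly_residues_shift[where Q = "\<lambda>x. x = 0" and P = P and u = u]
    by (simp add: Collect_conj_eq)
qed

lemma card_eq_sum_lifts_Omega:
  assumes "X \<subseteq> A_qh hs (P^(n+1))"
  shows "card X = (\<Sum>s\<in>Omega_star_qh hs (P^n). card (lifts P n X s))
                 + (\<Sum>s\<in>Omega_qh hs (P^n). card (lifts P n X s))"
proof -
  have X_res: "X \<subseteq> poly_residues (P^(n+1))"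
    using assms by (auto simp: A_qh_iff)
  have A_res: "A_qh hs (P^n) \<subseteq> poly_residues (P^n)"
    by (auto simp: A_qh_iff)
  have "card X = (\<Sum>s\<in>poly_residues (P^n). card (lifts P n X s))"
    by (rule card_eq_sum_card_lifts[OF nonzero X_res])
  also have "\<dots> = (\<Sum>s\<in>A_qh hs (P^n). card (lifts P n X s))"
  proof (rule sum.mono_neutral_right[OF _ A_res])
    show "\<forall>s\<in>poly_residues (P^n) - A_qh hs (P^n). card (lifts P n X s) = 0"
    proof
      fix s
      assume "s \<in> poly_residues (P^n) - A_qh hs (P^n)"
      then have "lifts P n (A_qh hs (P^(n+1))) s = {}"
        by (intro lifts_A_qh_outside nonzero) auto
      then have "lifts P n X s = {}"
        using assms by (auto simp: lifts_def)
      then show "card (lifts P n X s) = 0"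
        by simp
    qed
  qed (simp add: nonzero)
  also have "\<dots> = (\<Sum>s\<in>Omega_star_qh hs (P^n). card (lifts P n X s))
                 + (\<Sum>s\<in>Omega_qh hs (P^n). card (lifts P n X s))"
    unfolding A_qh_eq_Un_Omega
    by (rule sum.union_disjoint) (use finite_A_qh[OF power_not_zero[OF nonzero], of hs n]
        Omega_star_qh_Int_Omega_qh in \<open>auto simp: A_qh_eq_Un_Omega\<close>)
  finally show ?thesis .
qed

lemma card_A_qh_Suc:
  assumes "\<nu> \<le> n"
  shows "card (A_qh hs (P^(n+1)))
    = card (poly_residues P) * card (Omega_star_qh hs (P^n)) + lift_count P n * card (Omega_qh hs (P^n))"
  using card_eq_sum_lifts_Omega[OF subset_refl]
    lifts_A_qh_Omega_star[OF assms] card_lifts_Omega_qh(1)[OF assms]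
  by (simp add: mult.commute)

lemma card_Omega_qh_Suc:
  assumes "\<nu> \<le> n"
  shows "card (Omega_qh hs (P^(n+1))) = card (Omega_qh hs (P^n))"
proof -
  have "Omega_qh hs (P^(n+1)) \<subseteq> A_qh hs (P^(n+1))"
    by (auto simp: Omega_qh_iff)
  from card_eq_sum_lifts_Omega[OF this] show ?thesis
    using lifts_Omega_qh_Omega_star[where P = P and n = n and hs = hs] card_lifts_Omega_qh(2)[OF assms]
    by simp
qed

lemma card_A_qh_Suc_le: "card (A_qh hs (P^(n+1))) \<le> card (poly_residues P) * card (A_qh hs (P^n))"
proof -
  have "card (lifts P n X s) \<le> card (poly_residues P)" for X s
    using nonzero by (intro card_mono) (auto simp: lifts_def)
  then have "card (A_qh hs (P^(n+1)))
      \<le> (\<Sum>s\<in>Omega_star_qh hs (P^n). card (poly_residues P))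
        + (\<Sum>s\<in>Omega_qh hs (P^n). card (poly_residues P))"
    unfolding card_eq_sum_lifts_Omega[OF subset_refl] by (intro add_mono sum_mono)
  also have "\<dots> = card (poly_residues P) * card (A_qh hs (P^n))"
    using card_A_qh_eq_add[OF power_not_zero[OF nonzero], of hs n] by (simp add: algebra_simps)
  finally show ?thesis .
qed

lemma convergent_density: "convergent (\<lambda>n. real (card (A_qh hs (P ^ n))) / absP P ^ n)"
proof -
  have "decseq (\<lambda>n. real (card (A_qh hs (P ^ n))) / absP P ^ n)"
  proof (rule decseq_SucI)
    fix n
    have "real (card (A_qh hs (P^(n+1)))) \<le> absP P * real (card (A_qh hs (P^n)))"
      unfolding absP_eq_card of_nat_mult[symmetric] of_nat_le_iff by (rule card_A_qh_Suc_le)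
    then show "real (card (A_qh hs (P ^ Suc n))) / absP P ^ Suc n
        \<le> real (card (A_qh hs (P ^ n))) / absP P ^ n"
      using absP_gt_1 by (simp add: field_simps)
  qed
  moreover have "\<forall>n. 0 \<le> real (card (A_qh hs (P ^ n))) / absP P ^ n"
    using absP_gt_1 by simp
  ultimately obtain L where "(\<lambda>n. real (card (A_qh hs (P ^ n))) / absP P ^ n) \<longlonglongrightarrow> L"
    by (rule decseq_convergent)
  then show ?thesis
    by (rule convergentI)
qed

lemma delta_qh_eq:
  fixes \<alpha> :: "nat \<Rightarrow> real"
  assumes \<alpha>: "\<And>n. \<alpha> (Suc n) = absP P * \<alpha> n - absP P + lift_count P n"
    and bounded: "\<And>n. \<bar>\<alpha> n\<bar> \<le> 1"
  shows "delta_qh hs P = absP P powi (- int \<nu>) *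
    (real (card (Omega_star_qh hs (P ^ \<nu>))) + (1 - \<alpha> \<nu>) * real (card (Omega_qh hs (P ^ \<nu>))))"
proof -
  define N where "N n = real (card (A_qh hs (P^n)))" for n
  define Z where "Z = real (card (Omega_qh hs (P^\<nu>)))"
  have Omega_const: "card (Omega_qh hs (P^n)) = card (Omega_qh hs (P^\<nu>))" if "\<nu> \<le> n" for n
    using that
  proof (induction n rule: dec_induct)
    case (step m)
    with card_Omega_qh_Suc[of m] show ?case
      by simp
  qed simp
  have "N (Suc n) = absP P * (N n - Z) + real (lift_count P n) * Z" if "\<nu> \<le> n" for n
    using card_A_qh_Suc[OF that] card_A_qh_eq_add[OF power_not_zero[OF nonzero], of hs n]
      Omega_const[OF that]
    by (simp add: N_def Z_def absP_eq_card)
  then have "(\<lambda>n. N n / absP P ^ n) \<longlonglongrightarrow> (N \<nu> - \<alpha> \<nu> * Z) / absP P ^ \<nu>"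
    using absP_gt_1 \<alpha> bounded by (intro LIMSEQ_recurrence)
  then have "delta_qh hs P = (N \<nu> - \<alpha> \<nu> * Z) / absP P ^ \<nu>"
    unfolding delta_qh_def N_def by (rule limI)
  then show ?thesis
    using card_A_qh_eq_add[OF power_not_zero[OF nonzero], of hs \<nu>]
    by (simp add: N_def Z_def power_int_minus field_simps)
qed

lemma delta_qh_inert:
  assumes "chi_q P = -1"
  shows "(odd \<nu> \<longrightarrow> delta_qh hs P = absP P powi (- int \<nu>) *
            (real (card (Omega_star_qh hs (P ^ \<nu>)))
             + 1 / (absP P + 1) * real (card (Omega_qh hs (P ^ \<nu>)))))
       \<and> (even \<nu> \<longrightarrow> delta_qh hs P = absP P powi (- int \<nu>) *
            (real (card (Omega_star_qh hs (P ^ \<nu>)))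
             + absP P / (absP P + 1) * real (card (Omega_qh hs (P ^ \<nu>)))))"
proof -
  have coeff0: "coeff P 0 \<noteq> 0" and "\<not> (\<exists>c. coeff P 0 = c^2)"
    using assms by (auto simp: chi_q_def split: if_splits)
  then have aniso: "\<forall>x. \<not> P dvd x^2 + [:0,1:]"
    using coeff_0_square_if_dvd_square_plus_X[OF monic two_neq_zero] by blast
  have "\<not> P dvd [:0,1:]"
    using eq_X_or_not_dvd_X coeff0 by auto
  then have lift_count: "real (lift_count P n) = (if even n then absP P else 1)" for n
    using lift_count_even_if_not_dvd_X[OF prime _ card_poly_residues_odd]
      lift_count_odd_if_anisotropic[OF prime aniso]
    by (simp add: absP_eq_card)
  define \<alpha> where "\<alpha> n = (if even n then 1 / (absP P + 1) else absP P / (absP P + 1))" for n :: nat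
  have "\<alpha> (Suc n) = absP P * \<alpha> n - absP P + lift_count P n" for n
    using absP_gt_1 by (simp add: \<alpha>_def lift_count field_simps)
  moreover have "\<bar>\<alpha> n\<bar> \<le> 1" for n
    using absP_gt_1 by (simp add: \<alpha>_def)
  moreover have "1 - \<alpha> \<nu> = (if even \<nu> then absP P / (absP P + 1) else 1 / (absP P + 1))"
    using absP_gt_1 by (simp add: \<alpha>_def field_simps)
  ultimately show ?thesis
    using delta_qh_eq[of \<alpha>] by simp
qed

lemma delta_qh_ramified:
  assumes "chi_q P = 0"
  shows "delta_qh hs P = absP P powi (- int \<nu>) *
            (real (card (Omega_star_qh hs (P ^ \<nu>)))
             + 1 / 2 * real (card (Omega_qh hs (P ^ \<nu>))))"
proof -
  have "[:0,1:] dvd P"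
    using assms by (auto simp: chi_q_def X_dvd_iff split: if_splits)
  then have P_X: "P = [:0,1:]"
    by (rule monic_irreducible_X_dvd_imp_eq_X[OF monic irreducible])
  have count: "2 * lift_count P n = CARD('a) + 1" for n
    unfolding P_X lift_count_X using card_squares[OF odd_card] .
  have "2 * real (lift_count P n) = absP P + 1" for n
    using arg_cong[OF count[of n], of real] by (simp add: absP_def P_X)
  then have "1 / 2 = absP P * (1 / 2) - absP P + real (lift_count P n)" for n
    by (simp add: field_simps)
  from delta_qh_eq[where \<alpha> = "\<lambda>_. 1 / 2", OF this] show ?thesis
    by simp
qed

end

theorem mainTheorem11:
  fixes P :: "'a::{finite,field_gcd} poly" and hs :: "'a poly list" and \<nu> :: nat
  assumes q_odd: "odd CARD('a)"
    and monic: "lead_coeff P = 1" and irr: "irreducible P"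
    and k_pos: "hs \<noteq> []" and dist: "distinct hs"
    and nu: "\<nu> > nu_h hs P"
  shows "convergent (\<lambda>n. real (card (A_qh hs (P ^ n))) / absP P ^ n)
    \<and> (chi_q P = -1 \<longrightarrow>
         (odd \<nu> \<longrightarrow> delta_qh hs P = absP P powi (- int \<nu>) *
            (real (card (Omega_star_qh hs (P ^ \<nu>)))
             + 1 / (absP P + 1) * real (card (Omega_qh hs (P ^ \<nu>)))))
       \<and> (even \<nu> \<longrightarrow> delta_qh hs P = absP P powi (- int \<nu>) *
            (real (card (Omega_star_qh hs (P ^ \<nu>)))
             + absP P / (absP P + 1) * real (card (Omega_qh hs (P ^ \<nu>))))))
    \<and> (chi_q P = 0 \<longrightarrow>
         delta_qh hs P = absP P powi (- int \<nu>) *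
            (real (card (Omega_star_qh hs (P ^ \<nu>)))
             + 1 / 2 * real (card (Omega_qh hs (P ^ \<nu>)))))"
proof -
  interpret density_setting P hs \<nu>
    using q_odd monic irr dist nu by unfold_locales
  show ?thesis
    using convergent_density delta_qh_inert delta_qh_ramified by blast
qed

end
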